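(* Let $n\ge 4$, $d\ge 1$, $\tau>0$, $\sigma>0$. Let $\mu^\star_1,\mu^\star_2\stackrel{\mathrm{i.i.d.}}{\sim}\mathcal N(0,\tau^2 I_d)$ and $\xi_1,\dots,\xi_n\stackrel{\mathrm{i.i.d.}}{\sim}\mathcal N(0,\sigma^2 I_d)$, independent, let $z^\star_1,\dots,z^\star_n\in\{1,2\}$ be fixed labels with both classes $S^\star_\ell=\{i:z^\star_i=\ell\}$ nonempty, and $x_i=\mu^\star_{z^\star_i}+\xi_i$. Then the probability that there exists a partition of $[n]$ into two nonempty sets which is incorrect (i.e. does not coincide with $\{S^\star_1,S^\star_2\}$ up to swapping labels) and is a fixed point of Hartigan's algorithm is at most $2^n\rho_h^{d/4}$, where $$\rho_h=1-\left(\frac{4\tau^2(R^\star)^2n^{-1}}{3\tau^2+\sigma^2}\right)^2,\qquad R^\star=\min(|S^\star_1|,|S^\star_2|)/n.$$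
   Context: For a partition $\{C_1,C_2\}$ with centroids $\widehat\mu_k=|C_k|^{-1}\sum_{m\in C_k}x_m$, the Hartigan weighted distance is $\Delta_H^2(x_i,C_k)=\frac{|C_k|}{|C_k|-1}\|x_i-\widehat\mu_k\|^2$ if $i\in C_k$, and $\frac{|C_k|}{|C_k|+1}\|x_i-\widehat\mu_k\|^2$ if $i\notin C_k$. A partition is a fixed point of Hartigan's algorithm if no single-sample move is strictly improving: for every $i$ in a cluster $C_k$ with $|C_k|>1$ and the other cluster $C_{k'}$, $\Delta_H^2(x_i,C_k)\le\Delta_H^2(x_i,C_{k'})$. Randomness is over the centers and noise. *)

theory Defs
  imports "HOL-Probability.Probability"
begin

definition centroid :: "(nat \<Rightarrow> 'v::real_vector) \<Rightarrow> nat set \<Rightarrow> 'v" where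
  "centroid x C = (1 / real (card C)) *\<^sub>R (\<Sum>m\<in>C. x m)"

definition hartigan_dist :: "(nat \<Rightarrow> 'v::real_normed_vector) \<Rightarrow> nat set \<Rightarrow> nat \<Rightarrow> real" where
  "hartigan_dist x C i =
     (if i \<in> C then real (card C) / (real (card C) - 1) * (norm (x i - centroid x C))\<^sup>2
      else real (card C) / (real (card C) + 1) * (norm (x i - centroid x C))\<^sup>2)"

definition hartigan_fixed_point ::
  "(nat \<Rightarrow> 'v::real_normed_vector) \<Rightarrow> nat set \<Rightarrow> nat set \<Rightarrow> bool" where
  "hartigan_fixed_point x C1 C2 \<longleftrightarrow>
     (\<forall>i\<in>C1. card C1 > 1 \<longrightarrow> hartigan_dist x C1 i \<le> hartigan_dist x C2 i) \<and>
     (\<forall>i\<in>C2. card C2 > 1 \<longrightarrow> hartigan_dist x C2 i \<le> hartigan_dist x C1 i)"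

definition iso_gauss_density :: "real \<Rightarrow> real ^ 'd \<Rightarrow> ennreal" where
  "iso_gauss_density s x = ennreal (\<Prod>j\<in>UNIV. normal_density 0 s (x $ j))"

end

theory Submission
  imports Defs
begin

text \<open>
  For a sample \<open>i\<close> of a cluster \<open>C\<close>, both \<open>x\<^sub>i - \<mu>\<^sub>C\<close> and \<open>x\<^sub>i - \<mu>\<^sub>C\<^sub>'\<close> (\<open>C'\<close> the other cluster) are
  linear combinations of the independent Gaussian centers and noise vectors, hence centred Gaussian
  vectors with i.i.d. coordinates. So the two Hartigan distances are scaled chi-square variables with
  \<open>d\<close> degrees of freedom, with means \<open>d A\<close> and \<open>d B\<close> that depend only on the sizes of the clusters and
  on how many samples of the other true class they contain. A Chernoff bound via AM-GM, which needs
  no independence between the two, gives \<open>P(i stays) \<le> (4 A B / (A + B)\<^sup>2)\<^bsup>d/4\<^esup>\<close> when \<open>A > B\<close>.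
  Counting shows that every incorrect partition has a sample with \<open>A - B \<ge> 2 \<tau>\<^sup>2 \<cdot> 4 (R\<^sup>\<star>)\<^sup>2 / n\<close>,
  and since \<open>A + B \<le> 2 (3 \<tau>\<^sup>2 + \<sigma>\<^sup>2)\<close> this turns the bound into \<open>\<rho>\<^sub>h\<^bsup>d/4\<^esup>\<close>; a union bound over the
  \<open>2\<^sup>n\<close> subsets concludes.
\<close>

section \<open>Gaussian moment computations\<close>

lemma nn_integral_lborel_vec_prod:
  fixes f :: "'d::finite \<Rightarrow> real \<Rightarrow> ennreal"
  assumes [measurable]: "\<And>j. f j \<in> borel_measurable borel"
  shows "(\<integral>\<^sup>+x. (\<Prod>j\<in>UNIV. f j (x $ j)) \<partial>(lborel :: (real^'d) measure)) = (\<Prod>j\<in>UNIV. \<integral>\<^sup>+x. f j x \<partial>lborel)"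
proof -
  have Basis: "(Basis :: (real^'d) set) = range (\<lambda>j. axis j 1)"
    by (auto simp: Basis_vec_def)
  have inj: "inj (\<lambda>j::'d. axis j (1::real))"
    by (auto simp: inj_def axis_eq_axis)
  define F where "F b = f (inv (\<lambda>j. axis j 1) b)" for b :: "real^'d"
  have F_axis: "F (axis j 1) = f j" for j
    by (simp add: F_def inv_f_f[OF inj])
  have "(\<integral>\<^sup>+x. (\<Prod>b\<in>Basis. F b (x \<bullet> b)) \<partial>(lborel :: (real^'d) measure)) = (\<Prod>b\<in>Basis. \<integral>\<^sup>+x. F b x \<partial>lborel)"
    by (rule nn_integral_lborel_prod) (auto simp: F_def)
  then show ?thesis
    by (simp add: Basis prod.reindex[OF inj] F_axis cart_eq_inner_axis)
qed

lemma enn2real_prod: "enn2real (prod f A) = (\<Prod>i\<in>A. enn2real (f i))"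
  by (induction A rule: infinite_finite_induct) (auto simp: enn2real_mult)

lemma power2_norm_vec: "(norm (x :: real^'d))\<^sup>2 = (\<Sum>j\<in>UNIV. (x $ j)\<^sup>2)"
  unfolding power2_norm_eq_inner by (simp add: inner_vec_def power2_eq_square)

lemma (in prob_space) indep_vars_compose_restrict:
  fixes Z :: "'i \<Rightarrow> 'a \<Rightarrow> 'b::topological_space" and \<phi> :: "'l \<Rightarrow> ('i \<Rightarrow> 'b) \<Rightarrow> 'c::topological_space"
  assumes "indep_vars (\<lambda>_. borel) Z I" and "\<And>l. l \<in> L \<Longrightarrow> G l \<subseteq> I"
    and "disjoint_family_on G L"
    and "\<And>l. l \<in> L \<Longrightarrow> \<phi> l \<in> borel_measurable (PiM (G l) (\<lambda>_. borel))"
  shows "indep_vars (\<lambda>_. borel) (\<lambda>l \<omega>. \<phi> l (restrict (\<lambda>i. Z i \<omega>) (G l))) L"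
  using indep_vars_compose2[OF indep_vars_restrict[OF assms(1-3)] assms(4)] by simp

lemma exp_sq_times_normal_density:
  fixes s \<sigma> x :: real
  assumes "\<sigma> > 0" "1 - 2 * s * \<sigma>\<^sup>2 > 0"
  shows "exp (s * x\<^sup>2) * normal_density 0 \<sigma> x =
    (1 / sqrt (1 - 2 * s * \<sigma>\<^sup>2)) * normal_density 0 (\<sigma> / sqrt (1 - 2 * s * \<sigma>\<^sup>2)) x"
proof -
  define q where "q = 1 - 2 * s * \<sigma>\<^sup>2"
  have q: "q > 0" using assms by (simp add: q_def)
  have exponent: "s * x\<^sup>2 + - x\<^sup>2 / (2 * \<sigma>\<^sup>2) = - x\<^sup>2 / (2 * (\<sigma> / sqrt q)\<^sup>2)"
    using q assms(1) by (simp add: power_divide q_def field_simps)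
  have factor: "sqrt q * sqrt (2 * pi * (\<sigma> / sqrt q)\<^sup>2) = sqrt (2 * pi * \<sigma>\<^sup>2)"
    using q by (simp add: real_sqrt_mult[symmetric] power_divide)
  have "exp (s * x\<^sup>2) * normal_density 0 \<sigma> x = exp (s * x\<^sup>2 + - x\<^sup>2 / (2 * \<sigma>\<^sup>2)) / sqrt (2 * pi * \<sigma>\<^sup>2)"
    unfolding normal_density_def by (simp add: exp_add[symmetric] exp_diff)
  also have "\<dots> = exp (- x\<^sup>2 / (2 * (\<sigma> / sqrt q)\<^sup>2)) / (sqrt q * sqrt (2 * pi * (\<sigma> / sqrt q)\<^sup>2))"
    unfolding exponent factor ..
  also have "\<dots> = (1 / sqrt q) * normal_density 0 (\<sigma> / sqrt q) x"
    unfolding normal_density_def by simp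
  finally show ?thesis unfolding q_def .
qed

lemma nn_integral_exp_sq_normal_density:
  fixes s \<sigma> :: real
  assumes "\<sigma> > 0" "1 - 2 * s * \<sigma>\<^sup>2 > 0"
  shows "(\<integral>\<^sup>+x. ennreal (normal_density 0 \<sigma> x) * ennreal (exp (s * x\<^sup>2)) \<partial>lborel) =
    ennreal (1 / sqrt (1 - 2 * s * \<sigma>\<^sup>2))"
proof -
  have "(\<integral>\<^sup>+x. ennreal (normal_density 0 \<sigma> x) * ennreal (exp (s * x\<^sup>2)) \<partial>lborel) =
     (\<integral>\<^sup>+x. ennreal (1 / sqrt (1 - 2 * s * \<sigma>\<^sup>2)) * ennreal (normal_density 0 (\<sigma> / sqrt (1 - 2 * s * \<sigma>\<^sup>2)) x) \<partial>lborel)"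
  proof (intro nn_integral_cong)
    fix x
    show "ennreal (normal_density 0 \<sigma> x) * ennreal (exp (s * x\<^sup>2)) =
      ennreal (1 / sqrt (1 - 2 * s * \<sigma>\<^sup>2)) * ennreal (normal_density 0 (\<sigma> / sqrt (1 - 2 * s * \<sigma>\<^sup>2)) x)"
      using exp_sq_times_normal_density[OF assms, of x] assms
      by (simp add: ennreal_mult[symmetric] normal_density_nonneg mult.commute)
  qed
  also have "\<dots> = ennreal (1 / sqrt (1 - 2 * s * \<sigma>\<^sup>2))"
    using assms by (subst nn_integral_cmult) (auto simp: nn_integral_eq_integral normal_density_nonneg)
  finally show ?thesis .
qed

lemma one_le_exp_amgm:
  fixes lam u a b X Y :: real
  assumes "lam > 0" and "u > 0" and "a * X \<le> b * Y"
  shows "1 \<le> lam / 2 * exp (- (u * a / 2) * X) + 1 / (2 * lam) * exp (u * b / 2 * Y)"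
proof -
  \<comment> \<open>AM-GM \<open>\<alpha> \<beta> \<le> \<lambda>/2 \<alpha>\<^sup>2 + 1/(2\<lambda>) \<beta>\<^sup>2\<close>, where \<open>\<alpha> \<beta> \<ge> 1\<close> on the event \<open>a X \<le> b Y\<close>\<close>
  define \<alpha> where "\<alpha> = exp (- (u * a / 4) * X)"
  define \<beta> where "\<beta> = exp (u * b / 4 * Y)"
  have "\<alpha> * \<beta> = exp (u / 4 * (b * Y - a * X))"
    unfolding \<alpha>_def \<beta>_def mult_exp_exp by (simp add: algebra_simps)
  also have "\<dots> \<ge> 1" using assms by simp
  finally have "1 \<le> \<alpha> * \<beta>" .
  moreover have "\<alpha> * \<beta> \<le> lam / 2 * \<alpha>\<^sup>2 + 1 / (2 * lam) * \<beta>\<^sup>2"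
  proof -
    have "0 \<le> (lam * \<alpha> - \<beta>)\<^sup>2 / (2 * lam)" using assms by simp
    also have "\<dots> = lam / 2 * \<alpha>\<^sup>2 + 1 / (2 * lam) * \<beta>\<^sup>2 - \<alpha> * \<beta>"
      using assms by (simp add: field_simps power2_eq_square)
    finally show ?thesis by simp
  qed
  moreover have "\<alpha>\<^sup>2 = exp (- (u * a / 2) * X)" "\<beta>\<^sup>2 = exp (u * b / 2 * Y)"
    unfolding \<alpha>_def \<beta>_def power2_eq_square mult_exp_exp by simp_all
  ultimately show ?thesis by simp
qed

lemma balanced_chi_square_mgf_sum:
  fixes p q :: real and d :: nat
  assumes "p > 0" "q > 0"
  defines "lam \<equiv> (p / q) powr (d / 4)"
  shows "lam / 2 * (1 / sqrt p) ^ d + 1 / (2 * lam) * (1 / sqrt q) ^ d = (1 / (p * q)) powr (d / 4)"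
proof -
  have root: "(1 / sqrt x) ^ d = 1 / (x powr (d / 4))\<^sup>2" if "x > 0" for x :: real
  proof -
    have "(sqrt x) ^ d = (x powr (1/2)) ^ d" using that by (simp add: powr_half_sqrt)
    also have "\<dots> = x powr (d / 2)" using that by (simp add: powr_power)
    also have "\<dots> = (x powr (d / 4))\<^sup>2" using that by (simp add: powr_power)
    finally show ?thesis by (simp add: power_one_over)
  qed
  define P Q where "P = p powr (d / 4)" and "Q = q powr (d / 4)"
  have "P > 0" "Q > 0" using assms by (simp_all add: P_def Q_def)
  have "lam = P / Q" using assms by (simp add: lam_def P_def Q_def powr_divide)
  moreover have "(1 / (p * q)) powr (d / 4) = 1 / (P * Q)"
    using assms by (simp add: P_def Q_def powr_divide powr_mult)
  ultimately show ?thesis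
    unfolding root[OF \<open>p > 0\<close>] root[OF \<open>q > 0\<close>] P_def[symmetric] Q_def[symmetric]
    using \<open>P > 0\<close> \<open>Q > 0\<close> by (simp add: field_simps power2_eq_square)
qed

lemma (in prob_space) emeasure_le_exp_amgm:
  fixes X Y :: "'a \<Rightarrow> real"
  assumes "lam > 0" "u > 0" and [measurable]: "X \<in> borel_measurable M" "Y \<in> borel_measurable M"
  shows "emeasure M {\<omega>\<in>space M. a * X \<omega> \<le> b * Y \<omega>}
    \<le> ennreal (lam / 2) * (\<integral>\<^sup>+\<omega>. ennreal (exp (- (u * a / 2) * X \<omega>)) \<partial>M) +
      ennreal (1 / (2 * lam)) * (\<integral>\<^sup>+\<omega>. ennreal (exp (u * b / 2 * Y \<omega>)) \<partial>M)"
proof -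
  have "emeasure M {\<omega>\<in>space M. a * X \<omega> \<le> b * Y \<omega>} = (\<integral>\<^sup>+\<omega>. indicator {\<omega>\<in>space M. a * X \<omega> \<le> b * Y \<omega>} \<omega> \<partial>M)"
    by simp
  also have "\<dots> \<le> (\<integral>\<^sup>+\<omega>. ennreal (lam / 2) * ennreal (exp (- (u * a / 2) * X \<omega>)) +
       ennreal (1 / (2 * lam)) * ennreal (exp (u * b / 2 * Y \<omega>)) \<partial>M)"
    using one_le_exp_amgm[OF assms(1,2)] assms(1)
    by (intro nn_integral_mono)
      (auto simp: indicator_def ennreal_mult'[symmetric] ennreal_plus[symmetric] simp del: ennreal_plus)
  also have "\<dots> = ennreal (lam / 2) * (\<integral>\<^sup>+\<omega>. ennreal (exp (- (u * a / 2) * X \<omega>)) \<partial>M) +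
       ennreal (1 / (2 * lam)) * (\<integral>\<^sup>+\<omega>. ennreal (exp (u * b / 2 * Y \<omega>)) \<partial>M)"
    by (subst nn_integral_add) (auto simp: nn_integral_cmult)
  finally show ?thesis .
qed

lemma (in prob_space) prob_le_scaled_chi_square:
  fixes X Y :: "'a \<Rightarrow> real" and d :: nat
  assumes [measurable]: "X \<in> borel_measurable M" "Y \<in> borel_measurable M"
    and mgf_X: "\<And>s. 1 - 2 * s * vX > 0 \<Longrightarrow> (\<integral>\<^sup>+\<omega>. ennreal (exp (s * X \<omega>)) \<partial>M) = ennreal ((1 / sqrt (1 - 2 * s * vX)) ^ d)"
    and mgf_Y: "\<And>s. 1 - 2 * s * vY > 0 \<Longrightarrow> (\<integral>\<^sup>+\<omega>. ennreal (exp (s * Y \<omega>)) \<partial>M) = ennreal ((1 / sqrt (1 - 2 * s * vY)) ^ d)"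
    and "a > 0" "b > 0" "vY > 0" "a * vX > b * vY"
  shows "prob {\<omega>\<in>space M. a * X \<omega> \<le> b * Y \<omega>} \<le> (4 * (a * vX) * (b * vY) / (a * vX + b * vY)\<^sup>2) powr (d / 4)"
proof -
  define A where "A = a * vX"
  define B where "B = b * vY"
  have "B > 0" "A > B" using assms by (simp_all add: A_def B_def)
  \<comment> \<open>the choices of \<open>u\<close> and \<open>lam\<close> minimise the resulting bound\<close>
  define u where "u = (A - B) / (2 * A * B)"
  have "u > 0" unfolding u_def using \<open>B > 0\<close> \<open>A > B\<close> by simp
  define p where "p = (A + B) / (2 * B)"
  define q where "q = (A + B) / (2 * A)"
  have "p > 0" "q > 0" using \<open>B > 0\<close> \<open>A > B\<close> by (simp_all add: p_def q_def)
  have p: "1 - 2 * (- (u * a / 2)) * vX = p"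
  proof -
    have "1 - 2 * (- (u * a / 2)) * vX = 1 + u * A" by (simp add: A_def algebra_simps)
    also have "\<dots> = p" using \<open>B > 0\<close> \<open>A > B\<close> by (simp add: u_def p_def field_simps)
    finally show ?thesis .
  qed
  have q: "1 - 2 * (u * b / 2) * vY = q"
  proof -
    have "1 - 2 * (u * b / 2) * vY = 1 - u * B" by (simp add: B_def algebra_simps)
    also have "\<dots> = q" using \<open>B > 0\<close> \<open>A > B\<close> by (simp add: u_def q_def field_simps)
    finally show ?thesis .
  qed
  define lam where "lam = (p / q) powr (d / 4)"
  have "lam > 0" unfolding lam_def using \<open>p > 0\<close> \<open>q > 0\<close> by simp
  define R where "R = lam / 2 * (1 / sqrt p) ^ d + 1 / (2 * lam) * (1 / sqrt q) ^ d"
  have "emeasure M {\<omega>\<in>space M. a * X \<omega> \<le> b * Y \<omega>}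
      \<le> ennreal (lam / 2) * (\<integral>\<^sup>+\<omega>. ennreal (exp (- (u * a / 2) * X \<omega>)) \<partial>M) +
        ennreal (1 / (2 * lam)) * (\<integral>\<^sup>+\<omega>. ennreal (exp (u * b / 2 * Y \<omega>)) \<partial>M)"
    using \<open>lam > 0\<close> \<open>u > 0\<close> by (rule emeasure_le_exp_amgm) measurable
  also have "\<dots> = ennreal R"
    using mgf_X[of "- (u * a / 2)"] mgf_Y[of "u * b / 2"] p q \<open>p > 0\<close> \<open>q > 0\<close> \<open>lam > 0\<close>
    by (simp add: R_def ennreal_mult'[symmetric] ennreal_plus[symmetric] del: ennreal_plus)
  finally have "ennreal (prob {\<omega>\<in>space M. a * X \<omega> \<le> b * Y \<omega>}) \<le> ennreal R"
    by (simp add: emeasure_eq_measure)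
  moreover have "R \<ge> 0" unfolding R_def using \<open>lam > 0\<close> \<open>p > 0\<close> \<open>q > 0\<close>
    by (intro add_nonneg_nonneg mult_nonneg_nonneg zero_le_power) auto
  ultimately have "prob {\<omega>\<in>space M. a * X \<omega> \<le> b * Y \<omega>} \<le> R" by (rule ennreal_le_iff[THEN iffD1, rotated])
  also have "R = (1 / (p * q)) powr (d / 4)"
    unfolding R_def lam_def using \<open>p > 0\<close> \<open>q > 0\<close> by (rule balanced_chi_square_mgf_sum)
  also have "1 / (p * q) = 4 * A * B / (A + B)\<^sup>2"
    unfolding p_def q_def using \<open>B > 0\<close> \<open>A > B\<close> by (simp add: field_simps power2_eq_square)
  finally show ?thesis unfolding A_def B_def .
qed

section \<open>Linear combinations of independent isotropic Gaussian vectors\<close>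

locale indep_iso_gaussians = prob_space M for M :: "'a measure" +
  fixes Y :: "'k \<Rightarrow> 'a \<Rightarrow> real^'d" and K :: "'k set" and sd :: "'k \<Rightarrow> real"
  assumes finite_K: "finite K" and sd_pos: "\<And>k. k \<in> K \<Longrightarrow> sd k > 0"
    and distributed_Y: "\<And>k. k \<in> K \<Longrightarrow> distributed M lborel (Y k) (iso_gauss_density (sd k))"
    and indep_Y: "indep_vars (\<lambda>_. borel) Y K"
begin

lemma measurable_Y: "k \<in> K \<Longrightarrow> Y k \<in> borel_measurable M"
  using distributed_Y[of k] by (auto simp: distributed_def)

abbreviation coord_law :: "'k \<Rightarrow> real measure" where
  "coord_law k \<equiv> density lborel (\<lambda>x. ennreal (normal_density 0 (sd k) x))"

lemma prob_coords_in:
  assumes k: "k \<in> K" and [measurable]: "\<And>j. A j \<in> sets borel"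
  shows "prob {\<omega>\<in>space M. \<forall>j. Y k \<omega> $ j \<in> A j} = (\<Prod>j\<in>UNIV. measure (coord_law k) (A j))"
proof -
  define B where "B = {v::real^'d. \<forall>j. v $ j \<in> A j}"
  have [measurable]: "B \<in> sets borel" unfolding B_def by measurable
  have "{\<omega>\<in>space M. \<forall>j. Y k \<omega> $ j \<in> A j} = Y k -` B \<inter> space M" by (auto simp: B_def)
  then have "emeasure M {\<omega>\<in>space M. \<forall>j. Y k \<omega> $ j \<in> A j} = emeasure (distr M lborel (Y k)) B"
    using measurable_Y[OF k] by (simp add: emeasure_distr)
  also have "\<dots> = (\<integral>\<^sup>+v. iso_gauss_density (sd k) v * indicator B v \<partial>lborel)"
    using distributed_Y[OF k] by (simp add: distributed_def emeasure_density)
  also have "\<dots> = (\<integral>\<^sup>+v. (\<Prod>j\<in>UNIV. ennreal (normal_density 0 (sd k) (v $ j)) * indicator (A j) (v $ j)) \<partial>lborel)"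
    by (intro nn_integral_cong)
       (simp add: iso_gauss_density_def prod_ennreal[symmetric] prod.distrib B_def indicator_def)
  also have "\<dots> = (\<Prod>j\<in>UNIV. emeasure (coord_law k) (A j))"
    by (subst nn_integral_lborel_vec_prod) (auto simp: emeasure_density)
  finally show ?thesis
    by (simp add: measure_def enn2real_prod)
qed

definition coord :: "'k \<times> 'd \<Rightarrow> 'a \<Rightarrow> real" where
  "coord kj \<omega> = Y (fst kj) \<omega> $ snd kj"

lemma coord_measurable[measurable]:
  assumes "fst kj \<in> K"
  shows "coord kj \<in> borel_measurable M"
  unfolding coord_def using measurable_compose[OF measurable_Y[OF assms] borel_measurable_nth] .

lemma prob_coord:
  assumes k: "k \<in> K" and [measurable]: "A \<in> sets borel"
  shows "prob (coord (k, j) -` A \<inter> space M) = measure (coord_law k) A"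
proof -
  interpret N: prob_space "coord_law k"
    using sd_pos[OF k] by (rule prob_space_normal_density)
  have "coord (k, j) -` A \<inter> space M = {\<omega>\<in>space M. \<forall>j'. Y k \<omega> $ j' \<in> (if j' = j then A else UNIV)}"
    by (auto simp: coord_def split: if_splits)
  also have "prob \<dots> = (\<Prod>j'\<in>UNIV. measure (coord_law k) (if j' = j then A else UNIV))"
    by (rule prob_coords_in[OF k]) auto
  also have "\<dots> = (\<Prod>j'\<in>UNIV. if j' = j then measure (coord_law k) A else 1)"
    using N.prob_space by (intro prod.cong) auto
  finally show ?thesis by (simp add: prod.delta)
qed

lemma distributed_coord:
  assumes k: "k \<in> K"
  shows "distributed M lborel (coord (k, j)) (normal_density 0 (sd k))"
proof -
  interpret N: prob_space "coord_law k"
    using sd_pos[OF k] by (rule prob_space_normal_density)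
  have "distr M lborel (coord (k, j)) = coord_law k"
  proof (rule measure_eqI)
    fix A assume "A \<in> sets (distr M lborel (coord (k, j)))"
    then have [measurable]: "A \<in> sets borel" by simp
    have "emeasure (distr M lborel (coord (k, j))) A = ennreal (prob (coord (k, j) -` A \<inter> space M))"
      using k by (subst emeasure_distr) (auto simp: emeasure_eq_measure)
    then show "emeasure (distr M lborel (coord (k, j))) A = emeasure (coord_law k) A"
      using prob_coord[OF k] by (simp add: N.emeasure_eq_measure)
  qed simp
  then show ?thesis using k by (auto simp: distributed_def)
qed

lemma indep_vars_coord:
  assumes "K \<noteq> {}"
  shows "indep_vars (\<lambda>_. borel) coord (K \<times> UNIV)"
proof (subst indep_vars_finite[where E="\<lambda>_. sets borel"])
  show "K \<times> UNIV \<noteq> {}" "finite (K \<times> (UNIV :: 'd set))" using assms finite_K by auto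
  show "Int_stable (sets borel)" by (auto simp: Int_stable_def)
  show "\<forall>A\<in>K \<times> UNIV \<rightarrow> sets borel. prob (\<Inter>i\<in>K \<times> UNIV. coord i -` A i \<inter> space M)
          = (\<Prod>i\<in>K \<times> UNIV. prob (coord i -` A i \<inter> space M))"
  proof
    fix A :: "'k \<times> 'd \<Rightarrow> real set" assume A: "A \<in> K \<times> (UNIV::'d set) \<rightarrow> sets borel"
    define B where "B k = {v::real^'d. \<forall>j. v $ j \<in> A (k, j)}" for k
    have "B k \<in> sets borel" if "k \<in> K" for k
    proof -
      have [measurable]: "A (k, j) \<in> sets borel" for j using A that by auto
      show ?thesis unfolding B_def by measurable
    qed
    moreover have "(\<Inter>i\<in>K \<times> UNIV. coord i -` A i \<inter> space M) = (\<Inter>k\<in>K. Y k -` B k \<inter> space M)"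
      using assms by (auto simp: coord_def B_def)
    ultimately have "prob (\<Inter>i\<in>K \<times> UNIV. coord i -` A i \<inter> space M) = (\<Prod>k\<in>K. prob (Y k -` B k \<inter> space M))"
      using indep_varsD_finite[OF indep_Y assms finite_K, of B] by simp
    also have "\<dots> = (\<Prod>k\<in>K. \<Prod>j\<in>UNIV. measure (coord_law k) (A (k, j)))"
    proof (intro prod.cong refl)
      fix k assume k: "k \<in> K"
      have "Y k -` B k \<inter> space M = {\<omega>\<in>space M. \<forall>j. Y k \<omega> $ j \<in> A (k, j)}" by (auto simp: B_def)
      then show "prob (Y k -` B k \<inter> space M) = (\<Prod>j\<in>UNIV. measure (coord_law k) (A (k, j)))"
        using prob_coords_in[OF k, of "\<lambda>j. A (k, j)"] A k by auto
    qed
    also have "\<dots> = (\<Prod>i\<in>K \<times> UNIV. measure (coord_law (fst i)) (A i))"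
      by (simp add: prod.cartesian_product split_beta)
    also have "\<dots> = (\<Prod>i\<in>K \<times> UNIV. prob (coord i -` A i \<inter> space M))"
      using A by (intro prod.cong refl) (auto simp: Pi_iff intro!: prob_coord[symmetric])
    finally show "prob (\<Inter>i\<in>K \<times> UNIV. coord i -` A i \<inter> space M) = (\<Prod>i\<in>K \<times> UNIV. prob (coord i -` A i \<inter> space M))" .
  qed
qed (use sets.sigma_sets_eq[of "borel :: real measure"] in \<open>auto intro!: sets.sets_into_space\<close>)

definition lincomb :: "('k \<Rightarrow> real) \<Rightarrow> 'a \<Rightarrow> real^'d" where
  "lincomb c \<omega> = (\<Sum>k\<in>K. c k *\<^sub>R Y k \<omega>)"

definition lincomb_var :: "('k \<Rightarrow> real) \<Rightarrow> real" where
  "lincomb_var c = (\<Sum>k\<in>K. (c k)\<^sup>2 * (sd k)\<^sup>2)"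

lemma lincomb_measurable[measurable]: "lincomb c \<in> borel_measurable M"
proof -
  have [measurable]: "Y k \<in> borel_measurable M" if "k \<in> K" for k using measurable_Y that .
  show ?thesis unfolding lincomb_def by measurable
qed

lemma lincomb_nth: "lincomb c \<omega> $ j = (\<Sum>k\<in>{k\<in>K. c k \<noteq> 0}. c k * coord (k, j) \<omega>)"
  unfolding lincomb_def coord_def using finite_K by (simp add: sum.mono_neutral_right)

lemma lincomb_var_eq: "lincomb_var c = (\<Sum>k\<in>{k\<in>K. c k \<noteq> 0}. (\<bar>c k\<bar> * sd k)\<^sup>2)"
  unfolding lincomb_var_def using finite_K
  by (subst sum.mono_neutral_right[of K]) (auto simp: power_mult_distrib)

lemma lincomb_var_pos: "\<exists>k\<in>K. c k \<noteq> 0 \<Longrightarrow> lincomb_var c > 0"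
  unfolding lincomb_var_eq using finite_K sd_pos by (intro sum_pos) (auto, metis less_irrefl)

lemma distributed_lincomb_nth:
  assumes "\<exists>k\<in>K. c k \<noteq> 0"
  shows "distributed M lborel (\<lambda>\<omega>. lincomb c \<omega> $ j) (normal_density 0 (sqrt (lincomb_var c)))"
proof -
  let ?K = "{k\<in>K. c k \<noteq> 0}"
  have "indep_vars (\<lambda>_. borel) (\<lambda>k \<omega>. (\<lambda>f. c k * f (k, j)) (restrict (\<lambda>i. coord i \<omega>) {(k, j)})) ?K"
    by (rule indep_vars_compose_restrict[OF indep_vars_coord])
      (use assms in \<open>auto simp: disjoint_family_on_def\<close>)
  then have "indep_vars (\<lambda>_. borel) (\<lambda>k \<omega>. c k * coord (k, j) \<omega>) ?K"
    by (rule indep_vars_cong[THEN iffD1, rotated 3]) auto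
  moreover have "distributed M lborel (\<lambda>\<omega>. c k * coord (k, j) \<omega>) (normal_density 0 (\<bar>c k\<bar> * sd k))"
    if "k \<in> ?K" for k
    using normal_density_affine[OF distributed_coord[of k j], of "c k" 0] that sd_pos[of k] by simp
  ultimately have "distributed M lborel (\<lambda>\<omega>. \<Sum>k\<in>?K. c k * coord (k, j) \<omega>)
      (normal_density (\<Sum>k\<in>?K. 0) (sqrt (\<Sum>k\<in>?K. (\<bar>c k\<bar> * sd k)\<^sup>2)))"
    using assms finite_K sd_pos by (intro sum_indep_normal) auto
  then show ?thesis by (simp add: lincomb_nth lincomb_var_eq)
qed

lemma nn_integral_exp_norm_lincomb:
  assumes "\<exists>k\<in>K. c k \<noteq> 0" and "1 - 2 * s * lincomb_var c > 0"
  shows "(\<integral>\<^sup>+\<omega>. ennreal (exp (s * (norm (lincomb c \<omega>))\<^sup>2)) \<partial>M) =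
    ennreal ((1 / sqrt (1 - 2 * s * lincomb_var c)) ^ CARD('d))"
proof -
  have "lincomb_var c > 0" using assms(1) by (rule lincomb_var_pos)
  define W where "W j \<omega> = ennreal (exp (s * (lincomb c \<omega> $ j)\<^sup>2))" for j \<omega>
  have "(\<lambda>\<omega>. ennreal (exp (s * (norm (lincomb c \<omega>))\<^sup>2))) = (\<lambda>\<omega>. \<Prod>j\<in>UNIV. W j \<omega>)"
    by (auto simp: W_def power2_norm_vec sum_distrib_left exp_sum prod_ennreal)
  moreover have "indep_vars (\<lambda>_. borel) W UNIV"
  proof -
    have "indep_vars (\<lambda>_. borel) (\<lambda>j \<omega>. (\<lambda>f. ennreal (exp (s * (\<Sum>k\<in>{k\<in>K. c k \<noteq> 0}. c k * f (k, j))\<^sup>2)))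
        (restrict (\<lambda>i. coord i \<omega>) ({k\<in>K. c k \<noteq> 0} \<times> {j}))) UNIV"
      by (rule indep_vars_compose_restrict[OF indep_vars_coord])
        (use assms in \<open>auto simp: disjoint_family_on_def\<close>)
    then show ?thesis
      by (rule indep_vars_cong[THEN iffD1, rotated 3]) (auto simp: W_def lincomb_nth intro!: ext)
  qed
  ultimately have "(\<integral>\<^sup>+\<omega>. ennreal (exp (s * (norm (lincomb c \<omega>))\<^sup>2)) \<partial>M) = (\<Prod>j\<in>UNIV. \<integral>\<^sup>+\<omega>. W j \<omega> \<partial>M)"
    by (simp add: indep_vars_nn_integral)
  also have "\<dots> = (\<Prod>j\<in>(UNIV::'d set). ennreal (1 / sqrt (1 - 2 * s * lincomb_var c)))"
  proof (intro prod.cong refl)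
    fix j
    have "(\<integral>\<^sup>+\<omega>. W j \<omega> \<partial>M) = (\<integral>\<^sup>+x. ennreal (normal_density 0 (sqrt (lincomb_var c)) x) * ennreal (exp (s * x\<^sup>2)) \<partial>lborel)"
      unfolding W_def by (rule distributed_nn_integral[OF distributed_lincomb_nth[OF assms(1)], symmetric]) simp
    then show "(\<integral>\<^sup>+\<omega>. W j \<omega> \<partial>M) = ennreal (1 / sqrt (1 - 2 * s * lincomb_var c))"
      using nn_integral_exp_sq_normal_density[of "sqrt (lincomb_var c)" s] \<open>lincomb_var c > 0\<close> assms(2)
      by simp
  qed
  also have "\<dots> = ennreal ((1 / sqrt (1 - 2 * s * lincomb_var c)) ^ CARD('d))"
    using assms(2) by (simp add: ennreal_power)
  finally show ?thesis .
qed

lemma prob_scaled_norms_le: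
  assumes "\<exists>k\<in>K. c k \<noteq> 0" and "\<exists>k\<in>K. e k \<noteq> 0"
    and "a > 0" and "b > 0" and "a * lincomb_var c > b * lincomb_var e"
  shows "prob {\<omega>\<in>space M. a * (norm (lincomb c \<omega>))\<^sup>2 \<le> b * (norm (lincomb e \<omega>))\<^sup>2}
    \<le> (4 * (a * lincomb_var c) * (b * lincomb_var e) / (a * lincomb_var c + b * lincomb_var e)\<^sup>2)
        powr (CARD('d) / 4)"
  using assms lincomb_var_pos[OF assms(2)]
  by (intro prob_le_scaled_chi_square nn_integral_exp_norm_lincomb) auto

end

section \<open>Counting misplaced samples\<close>

text \<open>For a sample in a cluster of size \<open>m\<close> with \<open>r\<close> samples of the other true class, and a target
  cluster of size \<open>m'\<close> with \<open>r'\<close> of them: the expected Hartigan distance to the own cluster minus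
  that to the target, in units of \<open>2 \<tau>\<^sup>2 d\<close>.\<close>
definition move_margin :: "real \<Rightarrow> real \<Rightarrow> real \<Rightarrow> real \<Rightarrow> real" where
  "move_margin r m r' m' = r\<^sup>2 / (m * (m - 1)) - r'\<^sup>2 / (m' * (m' + 1))"

lemma variance_ratio_bound:
  fixes s t th E1 E2 :: real
  assumes "s > 0" and "t > 0" and "th > 0" and "0 \<le> E2" and "E1 \<le> 1" and "E1 - E2 \<ge> th"
  defines "A \<equiv> s\<^sup>2 + 2 * t\<^sup>2 * E1" and "B \<equiv> s\<^sup>2 + 2 * t\<^sup>2 * E2"
  shows "A > B" and "0 \<le> 4 * A * B / (A + B)\<^sup>2"
    and "4 * A * B / (A + B)\<^sup>2 \<le> 1 - (t\<^sup>2 * th / (3 * t\<^sup>2 + s\<^sup>2))\<^sup>2"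
proof -
  have "t\<^sup>2 > 0" "s\<^sup>2 > 0" using assms by simp_all
  show "A > B" unfolding A_def B_def using assms \<open>t\<^sup>2 > 0\<close> by simp
  have "B > 0" unfolding B_def using \<open>s\<^sup>2 > 0\<close> \<open>t\<^sup>2 > 0\<close> assms by (simp add: add_pos_nonneg)
  then show "0 \<le> 4 * A * B / (A + B)\<^sup>2" using \<open>A > B\<close> by simp
  have "4 * A * B / (A + B)\<^sup>2 = 1 - ((A - B) / (A + B))\<^sup>2"
  proof -
    have "(A + B)\<^sup>2 \<noteq> 0" using \<open>A > B\<close> \<open>B > 0\<close> by simp
    then have "1 - ((A - B) / (A + B))\<^sup>2 = ((A + B)\<^sup>2 - (A - B)\<^sup>2) / (A + B)\<^sup>2"
      by (metis power_divide diff_divide_distrib divide_self)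
    also have "(A + B)\<^sup>2 - (A - B)\<^sup>2 = 4 * A * B" by (simp add: power2_eq_square algebra_simps)
    finally show ?thesis by simp
  qed
  moreover have "t\<^sup>2 * th / (3 * t\<^sup>2 + s\<^sup>2) \<le> (A - B) / (A + B)"
  proof -
    have "t\<^sup>2 * (E1 + E2) \<le> t\<^sup>2 * 2"
      using assms \<open>t\<^sup>2 > 0\<close> by (intro mult_left_mono) auto
    moreover have "A + B = 2 * s\<^sup>2 + 2 * (t\<^sup>2 * (E1 + E2))"
      unfolding A_def B_def by (simp add: algebra_simps)
    ultimately have "A + B \<le> 2 * (3 * t\<^sup>2 + s\<^sup>2)"
      using \<open>t\<^sup>2 > 0\<close> by simp
    have "t\<^sup>2 * th / (3 * t\<^sup>2 + s\<^sup>2) = 2 * t\<^sup>2 * th / (2 * (3 * t\<^sup>2 + s\<^sup>2))"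
      by (simp only: mult.assoc mult_divide_mult_cancel_left_if) simp
    also have "\<dots> \<le> 2 * t\<^sup>2 * th / (A + B)"
      using \<open>A + B \<le> 2 * (3 * t\<^sup>2 + s\<^sup>2)\<close> \<open>A > B\<close> \<open>B > 0\<close> \<open>t\<^sup>2 > 0\<close> \<open>th > 0\<close>
      by (intro divide_left_mono) auto
    also have "\<dots> \<le> 2 * t\<^sup>2 * (E1 - E2) / (A + B)"
      using \<open>A > B\<close> \<open>B > 0\<close> \<open>t\<^sup>2 > 0\<close> assms(6) by (intro divide_right_mono) auto
    also have "2 * t\<^sup>2 * (E1 - E2) = A - B" by (simp add: A_def B_def algebra_simps)
    finally show ?thesis .
  qed
  moreover have "0 \<le> t\<^sup>2 * th / (3 * t\<^sup>2 + s\<^sup>2)" using assms by simp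
  ultimately show "4 * A * B / (A + B)\<^sup>2 \<le> 1 - (t\<^sup>2 * th / (3 * t\<^sup>2 + s\<^sup>2))\<^sup>2"
    by (simp add: power_mono)
qed


lemma inverse_add_inverse_ge: "u > 0 \<Longrightarrow> v > 0 \<Longrightarrow> 1 / u + 1 / v \<ge> 4 / (u + v :: real)"
proof -
  assume u: "u > 0" and v: "v > 0"
  have "4 * u * v \<le> (u + v)\<^sup>2" using sum_squares_ge_zero[of "u - v" 0]
    by (simp add: power2_eq_square algebra_simps)
  then have "4 / (u + v) \<le> (u + v) / (u * v)" using u v by (simp add: field_simps power2_eq_square)
  also have "\<dots> = 1 / u + 1 / v" using u v by (simp add: field_simps)
  finally show ?thesis .
qed

lemma margin_sum_in_fractions_ge:
  fixes p1 p2 m1 m2 :: real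
  assumes m: "m1 \<ge> 2" "m2 \<ge> 2" and p: "0 \<le> p2" "p2 \<le> p1" "p1 \<le> 1"
  shows "(p1\<^sup>2 + p1\<^sup>2 / (m1 - 1) - (p2\<^sup>2 - p2\<^sup>2 / (m2 + 1))) +
         ((1 - p2)\<^sup>2 + (1 - p2)\<^sup>2 / (m2 - 1) - ((1 - p1)\<^sup>2 - (1 - p1)\<^sup>2 / (m1 + 1))) \<ge> 2 / (m1 + m2)"
proof -
  define d n where "d = p1 - p2" and "n = m1 + m2"
  have "n \<ge> 4" "0 \<le> d" "d \<le> 1" using m p by (auto simp: d_def n_def)
  have harmonic: "x\<^sup>2 * (4 / n) \<le> x\<^sup>2 / (a - 1) + x\<^sup>2 / (b + 1)" if "a \<ge> 2" "b \<ge> 2" "a + b = n" for x a b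
  proof -
    have "4 / n \<le> 1 / (a - 1) + 1 / (b + 1)"
      using inverse_add_inverse_ge[of "a - 1" "b + 1"] that by simp
    then have "x\<^sup>2 * (4 / n) \<le> x\<^sup>2 * (1 / (a - 1) + 1 / (b + 1))" by (rule mult_left_mono) simp
    then show ?thesis by (simp add: distrib_left)
  qed
  have "p2\<^sup>2 * (4 / n) \<le> p2\<^sup>2 / (m1 - 1) + p2\<^sup>2 / (m2 + 1)"
    and "(1 - p1)\<^sup>2 * (4 / n) \<le> (1 - p1)\<^sup>2 / (m2 - 1) + (1 - p1)\<^sup>2 / (m1 + 1)"
    by (rule harmonic; use m in \<open>simp add: n_def\<close>)+
  moreover have "p2\<^sup>2 / (m1 - 1) \<le> p1\<^sup>2 / (m1 - 1)" "(1 - p1)\<^sup>2 / (m2 - 1) \<le> (1 - p2)\<^sup>2 / (m2 - 1)"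
    using p m by (auto intro!: divide_right_mono power_mono)
  moreover have "2 * (1 - d)\<^sup>2 / n \<le> p2\<^sup>2 * (4 / n) + (1 - p1)\<^sup>2 * (4 / n)"
  proof -
    have "(1 - d)\<^sup>2 \<le> 2 * (p2\<^sup>2 + (1 - p1)\<^sup>2)"
      using sum_squares_ge_zero[of "p2 - (1 - p1)" 0] by (simp add: d_def power2_eq_square algebra_simps)
    then show ?thesis using \<open>n \<ge> 4\<close> by (simp add: field_simps)
  qed
  moreover have "2 / n \<le> 2 * d + 2 * (1 - d)\<^sup>2 / n"
  proof -
    have "2 * d * n + 2 * (1 - d)\<^sup>2 - 2 = 2 * d * (n - 2) + 2 * d\<^sup>2"
      by (simp add: power2_eq_square algebra_simps)
    moreover have "0 \<le> 2 * d * (n - 2) + 2 * d\<^sup>2" using \<open>0 \<le> d\<close> \<open>n \<ge> 4\<close> by simp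
    ultimately have "2 \<le> 2 * d * n + 2 * (1 - d)\<^sup>2" by linarith
    then show ?thesis using \<open>n \<ge> 4\<close> by (simp add: field_simps)
  qed
  moreover have "p1\<^sup>2 - p2\<^sup>2 + (1 - p2)\<^sup>2 - (1 - p1)\<^sup>2 = 2 * d"
    by (simp add: d_def power2_eq_square algebra_simps)
  ultimately show ?thesis unfolding n_def by linarith
qed

lemma move_margin_sum_ge:
  fixes a1 b1 a2 b2 :: real
  assumes "0 \<le> a1" "0 \<le> b1" "0 \<le> a2" "0 \<le> b2" "a1 + b1 \<ge> 2" "a2 + b2 \<ge> 2"
    and "b2 * (a1 + b1) \<le> b1 * (a2 + b2)"
  shows "2 / (a1 + b1 + a2 + b2) \<le> move_margin b1 (a1 + b1) b2 (a2 + b2) + move_margin a2 (a2 + b2) a1 (a1 + b1)"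
proof -
  define m1 m2 where "m1 = a1 + b1" and "m2 = a2 + b2"
  define p1 p2 where "p1 = b1 / m1" and "p2 = b2 / m2"
  have "m1 \<ge> 2" "m2 \<ge> 2" using assms by (simp_all add: m1_def m2_def)
  have own: "x\<^sup>2 / (m * (m - 1)) = (x / m)\<^sup>2 + (x / m)\<^sup>2 / (m - 1)" if "m > 1" for x m :: real
    using that by (simp add: field_simps power2_eq_square)
  have other: "x\<^sup>2 / (m * (m + 1)) = (x / m)\<^sup>2 - (x / m)\<^sup>2 / (m + 1)" if "m > 0" for x m :: real
  proof -
    have "(x / m)\<^sup>2 - (x / m)\<^sup>2 / (m + 1) = (x / m)\<^sup>2 * (1 - 1 / (m + 1))" by (simp add: algebra_simps)
    also have "1 - 1 / (m + 1) = m / (m + 1)" using that by (simp add: field_simps)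
    also have "(x / m)\<^sup>2 * (m / (m + 1)) = (m * x\<^sup>2) / (m * (m * (m + 1)))"
      by (simp add: power_divide power2_eq_square mult.assoc)
    also have "\<dots> = x\<^sup>2 / (m * (m + 1))" using that by (intro mult_divide_mult_cancel_left) simp
    finally show ?thesis by simp
  qed
  have q: "a1 / m1 = 1 - p1" "a2 / m2 = 1 - p2"
    using \<open>m1 \<ge> 2\<close> \<open>m2 \<ge> 2\<close> by (simp_all add: p1_def p2_def m1_def m2_def field_simps)
  have "0 \<le> p2" "p2 \<le> p1" "p1 \<le> 1"
    using assms \<open>m1 \<ge> 2\<close> \<open>m2 \<ge> 2\<close> by (simp_all add: p1_def p2_def m1_def m2_def field_simps)
  note sum_ge = margin_sum_in_fractions_ge[OF \<open>m1 \<ge> 2\<close> \<open>m2 \<ge> 2\<close> this]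
  have "move_margin b1 m1 b2 m2 = p1\<^sup>2 + p1\<^sup>2 / (m1 - 1) - (p2\<^sup>2 - p2\<^sup>2 / (m2 + 1))"
    unfolding move_margin_def p1_def p2_def using \<open>m1 \<ge> 2\<close> \<open>m2 \<ge> 2\<close> by (simp add: own other)
  moreover have "move_margin a2 m2 a1 m1 = (1 - p2)\<^sup>2 + (1 - p2)\<^sup>2 / (m2 - 1) - ((1 - p1)\<^sup>2 - (1 - p1)\<^sup>2 / (m1 + 1))"
    unfolding move_margin_def q[symmetric] using \<open>m1 \<ge> 2\<close> \<open>m2 \<ge> 2\<close> by (simp add: own other)
  ultimately have "2 / (m1 + m2) \<le> move_margin b1 m1 b2 m2 + move_margin a2 m2 a1 m1"
    using sum_ge by simp
  then show ?thesis by (simp add: m1_def m2_def add_ac)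
qed

lemma move_margin_to_pure_ge:
  fixes r m R N :: real
  assumes "R \<le> r" "0 \<le> R" "2 \<le> m" "m \<le> N" "4 \<le> N"
  shows "4 * (R / N)\<^sup>2 / N \<le> move_margin r m 0 m'"
proof -
  have "4 * (R / N)\<^sup>2 / N \<le> (R / N)\<^sup>2"
    using assms mult_right_mono[of 4 N "(R / N)\<^sup>2"] by (simp add: field_simps)
  also have "\<dots> \<le> r\<^sup>2 / N\<^sup>2" using assms by (simp add: power_divide divide_right_mono power_mono)
  also have "\<dots> \<le> r\<^sup>2 / (m * (m - 1))"
  proof (rule divide_left_mono)
    have "m * (m - 1) \<le> N * N" using assms by (intro mult_mono) auto
    then show "m * (m - 1) \<le> N\<^sup>2" by (simp add: power2_eq_square)
  qed (use assms in simp_all)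
  finally show ?thesis by (simp add: move_margin_def)
qed

lemma four_sq_ratio_div_le:
  fixes R N :: real
  assumes "0 \<le> R" "2 * R \<le> N" "N > 0"
  shows "4 * (R / N)\<^sup>2 / N \<le> 1 / N"
proof -
  have "(R / N)\<^sup>2 \<le> (1 / 2)\<^sup>2" using assms by (intro power_mono) (auto simp: field_simps)
  then have "4 * (R / N)\<^sup>2 \<le> 1" by (simp add: power2_eq_square mult.commute)
  then show ?thesis using assms by (simp add: divide_right_mono)
qed

lemma card_other_class_sq_le:
  assumes "finite C" "i \<in> C" "card C \<ge> 2"
  shows "(real (card {l\<in>C. f l \<noteq> f i}))\<^sup>2 / (card C * (real (card C) - 1)) \<le> 1"
proof -
  have "card {l\<in>C. f l \<noteq> f i} \<le> card (C - {i})"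
    using assms by (intro card_mono) auto
  also have "\<dots> = card C - 1" using assms by simp
  finally have "real (card {l\<in>C. f l \<noteq> f i}) \<le> real (card C) - 1" using assms by linarith
  then have "(real (card {l\<in>C. f l \<noteq> f i}))\<^sup>2 \<le> (real (card C) - 1)\<^sup>2" by (intro power_mono) auto
  also have "\<dots> \<le> card C * (real (card C) - 1)" using assms by (simp add: power2_eq_square)
  finally show ?thesis using assms by simp
qed

text \<open>\<open>N j c\<close> counts the samples of true class \<open>c\<close> in cluster \<open>j\<close>, for \<open>j, c \<in> {1, 2}\<close>;
  \<open>3 - j\<close> is the other cluster and \<open>3 - c\<close> the other class.\<close>
definition has_misplaced :: "(nat \<Rightarrow> nat \<Rightarrow> nat) \<Rightarrow> real \<Rightarrow> nat \<Rightarrow> nat \<Rightarrow> bool" where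
  "has_misplaced N t j c \<longleftrightarrow> N j c \<ge> 1 \<and> N j 1 + N j 2 \<ge> 2 \<and>
     t \<le> move_margin (N j (3 - c)) (N j 1 + N j 2) (N (3 - j) (3 - c)) (N (3 - j) 1 + N (3 - j) 2)"

lemma exists_misplaced_ordered:
  fixes N :: "nat \<Rightarrow> nat \<Rightarrow> nat"
  defines "n \<equiv> N 1 1 + N 1 2 + N 2 1 + N 2 2"
  defines "t \<equiv> 4 * (real (min (N 1 1 + N 2 1) (N 1 2 + N 2 2)) / n)\<^sup>2 / n"
  assumes class1: "N 1 1 + N 2 1 \<ge> 1" and class2: "N 1 2 + N 2 2 \<ge> 1" and "n \<ge> 4"
    and incorrect1: "N 1 2 + N 2 1 \<ge> 1" and incorrect2: "N 1 1 + N 2 2 \<ge> 1"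
    and ordered: "N 2 2 * (N 1 1 + N 1 2) \<le> N 1 2 * (N 2 1 + N 2 2)"
  shows "has_misplaced N t 1 1 \<or> has_misplaced N t 2 2"
proof -
  define a1 b1 a2 b2 where "a1 = N 1 1" and "b1 = N 1 2" and "a2 = N 2 1" and "b2 = N 2 2"
  have mis1: "has_misplaced N t 1 1 \<longleftrightarrow> a1 \<ge> 1 \<and> a1 + b1 \<ge> 2 \<and> t \<le> move_margin b1 (a1 + b1) b2 (a2 + b2)"
    by (simp add: has_misplaced_def a1_def b1_def a2_def b2_def)
  have mis2: "has_misplaced N t 2 2 \<longleftrightarrow> b2 \<ge> 1 \<and> a2 + b2 \<ge> 2 \<and> t \<le> move_margin a2 (a2 + b2) a1 (a1 + b1)"
    by (simp add: has_misplaced_def a1_def b1_def a2_def b2_def)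
  define R where "R = real (min (a1 + a2) (b1 + b2))"
  have t: "t = 4 * (R / n)\<^sup>2 / n" by (simp add: t_def R_def a1_def b1_def a2_def b2_def)
  have n: "real n = a1 + b1 + a2 + b2" by (simp add: n_def a1_def b1_def a2_def b2_def)
  have "real n \<ge> 4" using \<open>n \<ge> 4\<close> by simp
  consider "a1 = 0" | "a1 \<noteq> 0" "b2 = 0" | "a1 \<noteq> 0" "b2 \<noteq> 0" by blast
  then show ?thesis
  proof cases
    case 1
    then have "b2 \<ge> 1" "a2 \<ge> 1" using class1 incorrect2 by (simp_all add: a1_def a2_def b2_def)
    then have "t \<le> move_margin a2 (a2 + b2) 0 (a1 + b1)"
      unfolding t using 1 \<open>real n \<ge> 4\<close> by (intro move_margin_to_pure_ge) (auto simp: R_def n)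
    then show ?thesis using mis2 \<open>b2 \<ge> 1\<close> \<open>a2 \<ge> 1\<close> 1 by simp
  next
    case 2
    then have "b1 \<ge> 1" using class2 by (simp add: b1_def b2_def)
    then have "t \<le> move_margin b1 (a1 + b1) 0 (a2 + b2)"
      unfolding t using 2 \<open>real n \<ge> 4\<close> by (intro move_margin_to_pure_ge) (auto simp: R_def n)
    then show ?thesis using mis1 \<open>b1 \<ge> 1\<close> 2 by simp
  next
    case 3
    have ord: "b2 * (a1 + b1) \<le> b1 * (a2 + b2)" using ordered by (simp add: a1_def b1_def a2_def b2_def)
    have "b1 \<ge> 1" using ord 3 by (cases "b1 = 0") auto
    have "a2 \<ge> 1"
    proof (rule ccontr)
      assume "\<not> a2 \<ge> 1"
      then have "a2 = 0" by simp
      then have "b2 * (a1 + b1) \<le> b2 * b1" using ord by (simp add: mult.commute)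
      then have "a1 + b1 \<le> b1" using 3 by simp
      then show False using 3 by simp
    qed
    have "2 / n \<le> move_margin b1 (a1 + b1) b2 (a2 + b2) + move_margin a2 (a2 + b2) a1 (a1 + b1)"
      using move_margin_sum_ge[of a1 b1 a2 b2] ord 3 \<open>b1 \<ge> 1\<close> \<open>a2 \<ge> 1\<close> unfolding n
      by (simp flip: of_nat_add of_nat_mult)
    moreover have "t \<le> 1 / n"
      unfolding t using \<open>real n \<ge> 4\<close> by (intro four_sq_ratio_div_le) (auto simp: R_def n min_def)
    ultimately have "t \<le> move_margin b1 (a1 + b1) b2 (a2 + b2) \<or> t \<le> move_margin a2 (a2 + b2) a1 (a1 + b1)"
      by linarith
    then show ?thesis using mis1 mis2 3 \<open>b1 \<ge> 1\<close> \<open>a2 \<ge> 1\<close> by auto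
  qed
qed

lemma exists_misplaced:
  fixes N :: "nat \<Rightarrow> nat \<Rightarrow> nat"
  defines "n \<equiv> N 1 1 + N 1 2 + N 2 1 + N 2 2"
  defines "t \<equiv> 4 * (real (min (N 1 1 + N 2 1) (N 1 2 + N 2 2)) / n)\<^sup>2 / n"
  assumes "N 1 1 + N 2 1 \<ge> 1" "N 1 2 + N 2 2 \<ge> 1" "n \<ge> 4"
    and "N 1 2 + N 2 1 \<ge> 1" "N 1 1 + N 2 2 \<ge> 1"
  shows "\<exists>j\<in>{1, 2}. \<exists>c\<in>{1, 2}. has_misplaced N t j c"
proof (cases "N 2 2 * (N 1 1 + N 1 2) \<le> N 1 2 * (N 2 1 + N 2 2)")
  case True
  then show ?thesis
    using exists_misplaced_ordered[of N] assms by (auto simp: n_def t_def)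
next
  case False
  let ?N = "\<lambda>j. N (3 - j)"
  have swap: "has_misplaced ?N t j c \<longleftrightarrow> has_misplaced N t (3 - j) c" if "j \<in> {1, 2}" for j c
    using that by (auto simp: has_misplaced_def add.commute)
  have "has_misplaced ?N t 1 1 \<or> has_misplaced ?N t 2 2"
    using exists_misplaced_ordered[of ?N] assms False by (simp add: n_def t_def add_ac)
  then show ?thesis using swap by fastforce
qed

section \<open>The two-cluster Gaussian model\<close>

locale two_cluster_model = prob_space M for M :: "'a measure" +
  fixes mu :: "nat \<Rightarrow> 'a \<Rightarrow> real ^ 'd" and xi :: "nat \<Rightarrow> 'a \<Rightarrow> real ^ 'd"
    and z :: "nat \<Rightarrow> nat" and n :: nat and tau sigma :: real
  assumes n_ge_4: "n \<ge> 4" and tau_pos: "tau > 0" and sigma_pos: "sigma > 0"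
    and distributed_mu: "\<And>l. l \<in> {1, 2} \<Longrightarrow> distributed M lborel (mu l) (iso_gauss_density tau)"
    and distributed_xi: "\<And>i. i \<in> {1..n} \<Longrightarrow> distributed M lborel (xi i) (iso_gauss_density sigma)"
    and indep_mu_xi: "indep_vars (\<lambda>_. borel) (case_sum mu xi) (Inl ` {1, 2} \<union> Inr ` {1..n})"
    and z_range: "\<And>i. i \<in> {1..n} \<Longrightarrow> z i \<in> {1, 2}"
    and class1_nonempty: "{i\<in>{1..n}. z i = 1} \<noteq> {}" and class2_nonempty: "{i\<in>{1..n}. z i = 2} \<noteq> {}"

sublocale two_cluster_model \<subseteq>
  indep_iso_gaussians M "case_sum mu xi" "Inl ` {1, 2} \<union> Inr ` {1..n}" "case_sum (\<lambda>_. tau) (\<lambda>_. sigma)"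
  using tau_pos sigma_pos distributed_mu distributed_xi indep_mu_xi by unfold_locales auto

context two_cluster_model
begin

definition X :: "nat \<Rightarrow> 'a \<Rightarrow> real^'d" where
  "X l \<omega> = mu (z l) \<omega> + xi l \<omega>"

text \<open>The coefficients of \<open>\<Sum>\<^sub>l w l X l\<close> on the centers (\<open>Inl c\<close>) and on the noise vectors (\<open>Inr l\<close>).\<close>
definition sample_coeffs :: "(nat \<Rightarrow> real) \<Rightarrow> nat + nat \<Rightarrow> real" where
  "sample_coeffs w = case_sum (\<lambda>c. \<Sum>l\<in>{l\<in>{1..n}. z l = c}. w l) w"

definition centered_weights :: "nat \<Rightarrow> nat set \<Rightarrow> nat \<Rightarrow> real" where
  "centered_weights i C l = (if l = i then 1 else 0) - (if l \<in> C then 1 / card C else 0)"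

lemma sum_index_set:
  fixes f :: "nat + nat \<Rightarrow> 'b::comm_monoid_add"
  shows "(\<Sum>k\<in>Inl ` {1, 2} \<union> Inr ` {1..n}. f k) = f (Inl 1) + f (Inl 2) + (\<Sum>l\<in>{1..n}. f (Inr l))"
proof -
  have "(\<Sum>k\<in>Inl ` {1, 2} \<union> Inr ` {1..n}. f k) = (\<Sum>k\<in>Inl ` {1::nat, 2}. f k) + (\<Sum>k\<in>Inr ` {1..n}. f k)"
    by (rule sum.union_disjoint) auto
  also have "(\<Sum>k\<in>Inr ` {1..n}. f k) = (\<Sum>l\<in>{1..n}. f (Inr l))"
    by (subst sum.reindex) auto
  finally show ?thesis by simp
qed

lemma sum_split_classes:
  "(\<Sum>l\<in>{1..n}. f l) = (\<Sum>l\<in>{l\<in>{1..n}. z l = 1}. f l) + (\<Sum>l\<in>{l\<in>{1..n}. z l = 2}. f l)"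
proof -
  have "{1..n} = {l\<in>{1..n}. z l = 1} \<union> {l\<in>{1..n}. z l = 2}" using z_range by blast
  then have "(\<Sum>l\<in>{1..n}. f l) = (\<Sum>l\<in>{l\<in>{1..n}. z l = 1} \<union> {l\<in>{1..n}. z l = 2}. f l)"
    by (rule sum.cong) simp
  also have "\<dots> = (\<Sum>l\<in>{l\<in>{1..n}. z l = 1}. f l) + (\<Sum>l\<in>{l\<in>{1..n}. z l = 2}. f l)"
    by (rule sum.union_disjoint) auto
  finally show ?thesis .
qed

lemma card_classes:
  assumes "C \<subseteq> {1..n}"
  shows "card {l\<in>C. z l = 1} + card {l\<in>C. z l = 2} = card C"
proof -
  have "finite C" using assms finite_subset by blast
  then have "card ({l\<in>C. z l = 1} \<union> {l\<in>C. z l = 2}) = card {l\<in>C. z l = 1} + card {l\<in>C. z l = 2}"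
    by (intro card_Un_disjoint) auto
  moreover have "{l\<in>C. z l = 1} \<union> {l\<in>C. z l = 2} = C" using assms z_range by fastforce
  ultimately show ?thesis by simp
qed

lemma other_class_eq:
  assumes "C \<subseteq> {1..n}" "c \<in> {1, 2}"
  shows "{l\<in>C. z l \<noteq> c} = {l\<in>C. z l = 3 - c}"
  using assms z_range by fastforce

lemma lincomb_sample_coeffs: "lincomb (sample_coeffs w) \<omega> = (\<Sum>l\<in>{1..n}. w l *\<^sub>R X l \<omega>)"
proof -
  have "lincomb (sample_coeffs w) \<omega> = (\<Sum>l\<in>{l\<in>{1..n}. z l = 1}. w l) *\<^sub>R mu 1 \<omega>
      + (\<Sum>l\<in>{l\<in>{1..n}. z l = 2}. w l) *\<^sub>R mu 2 \<omega> + (\<Sum>l\<in>{1..n}. w l *\<^sub>R xi l \<omega>)"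
    unfolding lincomb_def sum_index_set by (simp add: sample_coeffs_def)
  also have "(\<Sum>l\<in>{l\<in>{1..n}. z l = 1}. w l) *\<^sub>R mu 1 \<omega> + (\<Sum>l\<in>{l\<in>{1..n}. z l = 2}. w l) *\<^sub>R mu 2 \<omega>
      = (\<Sum>l\<in>{1..n}. w l *\<^sub>R mu (z l) \<omega>)"
    unfolding sum_split_classes[of "\<lambda>l. w l *\<^sub>R mu (z l) \<omega>"] by (simp add: scaleR_sum_left)
  finally show ?thesis by (simp add: X_def scaleR_add_right sum.distrib)
qed

lemma lincomb_var_sample_coeffs:
  "lincomb_var (sample_coeffs w) =
     tau\<^sup>2 * ((sample_coeffs w (Inl 1))\<^sup>2 + (sample_coeffs w (Inl 2))\<^sup>2) + sigma\<^sup>2 * (\<Sum>l\<in>{1..n}. (w l)\<^sup>2)"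
  unfolding lincomb_var_def sum_index_set by (simp add: sample_coeffs_def algebra_simps sum_distrib_left)

lemma lincomb_centered_weights:
  assumes "i \<in> {1..n}" "C \<subseteq> {1..n}"
  shows "lincomb (sample_coeffs (centered_weights i C)) \<omega> = X i \<omega> - centroid (\<lambda>l. X l \<omega>) C"
proof -
  have "(\<Sum>l\<in>{1..n}. centered_weights i C l *\<^sub>R X l \<omega>)
      = (\<Sum>l\<in>{1..n}. (if l = i then X l \<omega> else 0)) - (\<Sum>l\<in>{1..n}. (if l \<in> C then (1 / card C) *\<^sub>R X l \<omega> else 0))"
    by (simp add: centered_weights_def scaleR_diff_left sum_subtractf if_distrib[of "\<lambda>x. x *\<^sub>R X _ \<omega>"] cong: if_cong)
  also have "(\<Sum>l\<in>{1..n}. (if l \<in> C then (1 / card C) *\<^sub>R X l \<omega> else 0)) = (\<Sum>l\<in>{1..n} \<inter> C. (1 / card C) *\<^sub>R X l \<omega>)"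
    by (rule sum.inter_restrict[symmetric]) simp
  also have "{1..n} \<inter> C = C" using assms by auto
  finally show ?thesis
    unfolding lincomb_sample_coeffs centroid_def using assms by (simp add: scaleR_sum_right)
qed

lemma sum_sq_centered_weights:
  assumes "i \<in> {1..n}" "C \<subseteq> {1..n}"
  shows "(\<Sum>l\<in>{1..n}. (centered_weights i C l)\<^sup>2) = 1 - (if i \<in> C then 2 / card C else 0) + 1 / card C"
proof -
  have "(\<Sum>l\<in>{1..n}. (centered_weights i C l)\<^sup>2)
      = (\<Sum>l\<in>{1..n}. (if l = i then 1 - (if i \<in> C then 2 / card C else 0) else 0) + (if l \<in> C then (1 / card C)\<^sup>2 else 0))"
    by (intro sum.cong refl) (auto simp: centered_weights_def power2_eq_square algebra_simps)
  also have "\<dots> = (1 - (if i \<in> C then 2 / card C else 0)) + (\<Sum>l\<in>{1..n}. (if l \<in> C then (1 / card C)\<^sup>2 else 0))"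
    using assms by (simp add: sum.distrib)
  also have "(\<Sum>l\<in>{1..n}. (if l \<in> C then (1 / real (card C))\<^sup>2 else 0)) = (\<Sum>l\<in>{1..n} \<inter> C. (1 / card C)\<^sup>2)"
    by (rule sum.inter_restrict[symmetric]) simp
  also have "{1..n} \<inter> C = C" using assms by auto
  finally show ?thesis by (simp add: power2_eq_square)
qed

lemma center_coeff_centered_weights:
  assumes "i \<in> {1..n}" "C \<subseteq> {1..n}"
  shows "sample_coeffs (centered_weights i C) (Inl c) = (if z i = c then 1 else 0) - card {l\<in>C. z l = c} / card C"
proof -
  have "sample_coeffs (centered_weights i C) (Inl c)
      = (\<Sum>l\<in>{l\<in>{1..n}. z l = c}. (if l = i then 1 else 0)) - (\<Sum>l\<in>{l\<in>{1..n}. z l = c}. (if l \<in> C then 1 / card C else 0))"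
    by (simp add: sample_coeffs_def centered_weights_def sum_subtractf)
  also have "(\<Sum>l\<in>{l\<in>{1..n}. z l = c}. (if l \<in> C then 1 / real (card C) else 0)) = (\<Sum>l\<in>{l\<in>{1..n}. z l = c} \<inter> C. 1 / card C)"
    by (rule sum.inter_restrict[symmetric]) simp
  also have "{l\<in>{1..n}. z l = c} \<inter> C = {l\<in>C. z l = c}" using assms by auto
  finally show ?thesis using assms by simp
qed

lemma center_coeffs_sq_sum:
  assumes "i \<in> {1..n}" "C \<subseteq> {1..n}" "C \<noteq> {}"
  shows "(sample_coeffs (centered_weights i C) (Inl 1))\<^sup>2 + (sample_coeffs (centered_weights i C) (Inl 2))\<^sup>2
    = 2 * (card {l\<in>C. z l \<noteq> z i} / card C)\<^sup>2"
proof -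
  let ?r = "real (card {l\<in>C. z l \<noteq> z i})" and ?m = "real (card C)"
  have "finite C" using assms finite_subset by blast
  have "card {l\<in>C. z l = z i} + card {l\<in>C. z l \<noteq> z i} = card C"
    using \<open>finite C\<close> by (subst card_Un_disjoint[symmetric]) (auto intro: arg_cong[where f=card])
  then have own: "sample_coeffs (centered_weights i C) (Inl (z i)) = ?r / ?m"
    using assms \<open>finite C\<close> by (simp add: center_coeff_centered_weights field_simps flip: of_nat_add)
  have "{l\<in>C. z l \<noteq> z i} = {l\<in>C. z l = 3 - z i}"
    using assms(2) z_range[OF assms(1)] by (rule other_class_eq)
  then have other: "sample_coeffs (centered_weights i C) (Inl (3 - z i)) = - ?r / ?m"
    using assms z_range[of i] by (auto simp: center_coeff_centered_weights)
  show ?thesis using own other z_range[OF assms(1)] by (auto simp: power2_eq_square)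
qed

lemma lincomb_var_centered_weights:
  assumes "i \<in> {1..n}" "C \<subseteq> {1..n}" "C \<noteq> {}"
  shows "lincomb_var (sample_coeffs (centered_weights i C))
    = 2 * tau\<^sup>2 * (card {l\<in>C. z l \<noteq> z i} / card C)\<^sup>2 + sigma\<^sup>2 * (1 - (if i \<in> C then 2 / card C else 0) + 1 / card C)"
  unfolding lincomb_var_sample_coeffs center_coeffs_sq_sum[OF assms] sum_sq_centered_weights[OF assms(1,2)]
  by simp

lemma scaled_var_own_cluster:
  assumes "C \<subseteq> {1..n}" "i \<in> C" "card C \<ge> 2"
  shows "card C / (real (card C) - 1) * lincomb_var (sample_coeffs (centered_weights i C))
    = sigma\<^sup>2 + 2 * tau\<^sup>2 * ((real (card {l\<in>C. z l \<noteq> z i}))\<^sup>2 / (card C * (real (card C) - 1)))"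
proof -
  have "real (card C) \<ge> 2" using assms by simp
  then show ?thesis using assms
    by (subst lincomb_var_centered_weights) (auto simp: field_simps power2_eq_square)
qed

lemma scaled_var_other_cluster:
  assumes "C \<subseteq> {1..n}" "i \<in> {1..n}" "i \<notin> C" "C \<noteq> {}"
  shows "card C / (real (card C) + 1) * lincomb_var (sample_coeffs (centered_weights i C))
    = sigma\<^sup>2 + 2 * tau\<^sup>2 * ((real (card {l\<in>C. z l \<noteq> z i}))\<^sup>2 / (card C * (real (card C) + 1)))"
proof -
  define m r where "m = real (card C)" and "r = real (card {l\<in>C. z l \<noteq> z i})"
  have "m > 0" using assms finite_subset[OF assms(1)] by (simp add: m_def card_gt_0_iff)
  have "m / (m + 1) * (2 * tau\<^sup>2 * (r / m)\<^sup>2 + sigma\<^sup>2 * (1 + 1 / m))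
      = sigma\<^sup>2 + 2 * tau\<^sup>2 * (r\<^sup>2 / (m * (m + 1)))"
  proof -
    have "m + 1 \<noteq> 0" "m \<noteq> 0" using \<open>m > 0\<close> by simp_all
    then show ?thesis by (simp add: divide_simps power2_eq_square)
  qed
  then show ?thesis
    using assms by (subst lincomb_var_centered_weights) (simp_all add: m_def r_def)
qed

lemma hartigan_dist_eq_lincomb:
  assumes "i \<in> {1..n}" "C \<subseteq> {1..n}"
  shows "hartigan_dist (\<lambda>l. X l \<omega>) C i =
    (if i \<in> C then card C / (real (card C) - 1) else card C / (real (card C) + 1))
      * (norm (lincomb (sample_coeffs (centered_weights i C)) \<omega>))\<^sup>2"
  unfolding hartigan_dist_def lincomb_centered_weights[OF assms] by simp

lemma centered_weights_nonzero:
  assumes "i \<in> {1..n}" "i \<notin> C \<or> card C \<ge> 2"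
  shows "\<exists>k\<in>Inl ` {1, 2} \<union> Inr ` {1..n}. sample_coeffs (centered_weights i C) k \<noteq> 0"
proof
  show "Inr i \<in> Inl ` {1, 2} \<union> Inr ` {1..n}" using assms(1) by simp
  show "sample_coeffs (centered_weights i C) (Inr i) \<noteq> 0"
    using assms(2) by (auto simp: sample_coeffs_def centered_weights_def)
qed

lemma prob_stay_le:
  assumes "C \<subseteq> {1..n}" and "i \<in> C" and "card C \<ge> 2" and "{1..n} - C \<noteq> {}" and "th > 0"
    and margin: "th \<le> move_margin (card {l\<in>C. z l \<noteq> z i}) (card C)
                   (card {l\<in>{1..n} - C. z l \<noteq> z i}) (card ({1..n} - C))"
  shows "prob {\<omega>\<in>space M. hartigan_dist (\<lambda>l. X l \<omega>) C i \<le> hartigan_dist (\<lambda>l. X l \<omega>) ({1..n} - C) i}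
    \<le> (1 - (tau\<^sup>2 * th / (3 * tau\<^sup>2 + sigma\<^sup>2))\<^sup>2) powr (CARD('d) / 4)"
proof -
  define C' where "C' = {1..n} - C"
  define m m' r r' where "m = real (card C)" and "m' = real (card C')"
    and "r = real (card {l\<in>C. z l \<noteq> z i})" and "r' = real (card {l\<in>C'. z l \<noteq> z i})"
  define cU cV where "cU = sample_coeffs (centered_weights i C)" and "cV = sample_coeffs (centered_weights i C')"
  have "i \<in> {1..n}" "i \<notin> C'" "C' \<subseteq> {1..n}" "C' \<noteq> {}" using assms by (auto simp: C'_def)
  have "m \<ge> 2" using assms by (simp add: m_def)
  have event: "{\<omega>\<in>space M. hartigan_dist (\<lambda>l. X l \<omega>) C i \<le> hartigan_dist (\<lambda>l. X l \<omega>) C' i}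
      = {\<omega>\<in>space M. m / (m - 1) * (norm (lincomb cU \<omega>))\<^sup>2 \<le> m' / (m' + 1) * (norm (lincomb cV \<omega>))\<^sup>2}"
    unfolding hartigan_dist_eq_lincomb[OF \<open>i \<in> {1..n}\<close> assms(1)]
      hartigan_dist_eq_lincomb[OF \<open>i \<in> {1..n}\<close> \<open>C' \<subseteq> {1..n}\<close>] m_def m'_def cU_def cV_def
    using \<open>i \<in> C\<close> \<open>i \<notin> C'\<close> by simp
  have nonzero: "\<exists>k\<in>Inl ` {1, 2} \<union> Inr ` {1..n}. cU k \<noteq> 0" "\<exists>k\<in>Inl ` {1, 2} \<union> Inr ` {1..n}. cV k \<noteq> 0"
    unfolding cU_def cV_def using \<open>i \<in> {1..n}\<close> \<open>i \<notin> C'\<close> assms(3) by (intro centered_weights_nonzero; simp)+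
  have A: "m / (m - 1) * lincomb_var cU = sigma\<^sup>2 + 2 * tau\<^sup>2 * (r\<^sup>2 / (m * (m - 1)))"
    unfolding m_def r_def cU_def by (rule scaled_var_own_cluster) fact+
  have B: "m' / (m' + 1) * lincomb_var cV = sigma\<^sup>2 + 2 * tau\<^sup>2 * (r'\<^sup>2 / (m' * (m' + 1)))"
    unfolding m'_def r'_def cV_def by (rule scaled_var_other_cluster) fact+
  have E1: "r\<^sup>2 / (m * (m - 1)) \<le> 1"
    unfolding r_def m_def using finite_subset[OF assms(1) finite_atLeastAtMost] assms(2,3)
    by (rule card_other_class_sq_le)
  have E2: "0 \<le> r'\<^sup>2 / (m' * (m' + 1))" by (simp add: m'_def)
  have gap: "th \<le> r\<^sup>2 / (m * (m - 1)) - r'\<^sup>2 / (m' * (m' + 1))"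
    using margin by (simp add: move_margin_def m_def m'_def r_def r'_def C'_def)
  note ratio = variance_ratio_bound[OF sigma_pos tau_pos \<open>th > 0\<close> E2 E1 gap]
  have "prob {\<omega>\<in>space M. m / (m - 1) * (norm (lincomb cU \<omega>))\<^sup>2 \<le> m' / (m' + 1) * (norm (lincomb cV \<omega>))\<^sup>2}
      \<le> (4 * (m / (m - 1) * lincomb_var cU) * (m' / (m' + 1) * lincomb_var cV)
          / (m / (m - 1) * lincomb_var cU + m' / (m' + 1) * lincomb_var cV)\<^sup>2) powr (CARD('d) / 4)"
    using ratio(1) \<open>m \<ge> 2\<close> \<open>C' \<noteq> {}\<close> unfolding A[symmetric] B[symmetric]
    by (intro prob_scaled_norms_le nonzero) (auto simp: m'_def card_gt_0_iff finite_subset[OF \<open>C' \<subseteq> {1..n}\<close>])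
  also have "\<dots> \<le> (1 - (tau\<^sup>2 * th / (3 * tau\<^sup>2 + sigma\<^sup>2))\<^sup>2) powr (CARD('d) / 4)"
    unfolding A B using ratio(2,3) by (intro powr_mono2) auto
  finally show ?thesis unfolding event[unfolded C'_def] .
qed

definition true_cluster :: "nat \<Rightarrow> nat set" where
  "true_cluster c = {i\<in>{1..n}. z i = c}"

definition threshold :: real where
  "threshold = 4 * (real (min (card (true_cluster 1)) (card (true_cluster 2))) / n)\<^sup>2 / n"

definition rho :: real where
  "rho = 1 - (4 * tau\<^sup>2 * (real (min (card (true_cluster 1)) (card (true_cluster 2))) / n)\<^sup>2 / n
              / (3 * tau\<^sup>2 + sigma\<^sup>2))\<^sup>2"

lemma rho_eq: "rho = 1 - (tau\<^sup>2 * threshold / (3 * tau\<^sup>2 + sigma\<^sup>2))\<^sup>2"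
  by (simp add: rho_def threshold_def mult.assoc)

lemma card_true_cluster_pos: "card (true_cluster 1) > 0" "card (true_cluster 2) > 0"
  using class1_nonempty class2_nonempty by (auto simp: true_cluster_def card_gt_0_iff)

lemma threshold_pos: "threshold > 0"
  using card_true_cluster_pos n_ge_4 by (simp add: threshold_def)

lemma card_class_split:
  assumes "C1 \<subseteq> {1..n}"
  shows "card {l\<in>C1. z l = c} + card {l\<in>{1..n} - C1. z l = c} = card (true_cluster c)"
proof -
  have "true_cluster c = {l\<in>C1. z l = c} \<union> {l\<in>{1..n} - C1. z l = c}"
    using assms by (auto simp: true_cluster_def)
  also have "card \<dots> = card {l\<in>C1. z l = c} + card {l\<in>{1..n} - C1. z l = c}"
    using finite_subset[OF assms] by (intro card_Un_disjoint) auto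
  finally show ?thesis ..
qed

lemma split_eq_true_clusters:
  assumes "C1 \<subseteq> {1..n}" "c \<in> {1, 2}"
    and "{l\<in>C1. z l = 3 - c} = {}" "{l\<in>{1..n} - C1. z l = c} = {}"
  shows "{C1, {1..n} - C1} = {true_cluster 1, true_cluster 2}"
proof -
  have inside: "z l = c" if "l \<in> C1" for l
  proof -
    have "z l \<noteq> 3 - c" using that assms(3) by blast
    then show ?thesis using z_range[of l] that assms(1,2) by auto
  qed
  have outside: "z l = 3 - c" if "l \<in> {1..n}" "l \<notin> C1" for l
  proof -
    have "z l \<noteq> c" using that assms(4) by blast
    then show ?thesis using z_range[OF that(1)] assms(2) by auto
  qed
  have "c \<noteq> 3 - c" using assms(2) by auto
  then have "C1 = true_cluster c" "{1..n} - C1 = true_cluster (3 - c)"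
    using inside outside assms(1) unfolding true_cluster_def by force+
  moreover have "c = 1 \<or> c = 2" using assms(2) by simp
  ultimately show ?thesis by (elim disjE) (simp_all add: insert_commute)
qed

definition split_count :: "nat set \<Rightarrow> nat \<Rightarrow> nat \<Rightarrow> nat" where
  "split_count C1 j c = card {l\<in>(if j = 1 then C1 else {1..n} - C1). z l = c}"

lemma exists_misplaced_split_count:
  assumes "C1 \<subseteq> {1..n}" and incorrect: "{C1, {1..n} - C1} \<noteq> {true_cluster 1, true_cluster 2}"
  shows "\<exists>j\<in>{1, 2}. \<exists>c\<in>{1, 2}. has_misplaced (split_count C1) threshold j c"
proof -
  define N where "N = split_count C1"
  have classes: "N 1 c + N 2 c = card (true_cluster c)" for c
    using card_class_split[OF assms(1)] by (simp add: N_def split_count_def)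
  have total: "N 1 1 + N 1 2 + N 2 1 + N 2 2 = n"
    using classes[of 1] classes[of 2] card_classes[of "{1..n}"] by (simp add: true_cluster_def)
  have incorrect_counts: "N 1 (3 - c) + N 2 c \<ge> 1" if "c \<in> {1, 2}" for c
  proof (rule ccontr)
    assume "\<not> N 1 (3 - c) + N 2 c \<ge> 1"
    then have "N 1 (3 - c) = 0" "N 2 c = 0" by simp_all
    then have "card {l\<in>C1. z l = 3 - c} = 0" "card {l\<in>{1..n} - C1. z l = c} = 0"
      unfolding N_def split_count_def by simp_all
    then have "{l\<in>C1. z l = 3 - c} = {}" "{l\<in>{1..n} - C1. z l = c} = {}"
      using finite_subset[OF assms(1) finite_atLeastAtMost] by simp_all
    then show False using split_eq_true_clusters[OF assms(1) that] incorrect by simp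
  qed
  have incorrect1: "N 1 2 + N 2 1 \<ge> 1" and incorrect2: "N 1 1 + N 2 2 \<ge> 1"
    using incorrect_counts[of 1] incorrect_counts[of 2] by simp_all
  have class1: "N 1 1 + N 2 1 \<ge> 1" and class2: "N 1 2 + N 2 2 \<ge> 1"
    unfolding classes using card_true_cluster_pos by simp_all
  have t: "4 * (real (min (N 1 1 + N 2 1) (N 1 2 + N 2 2)) / n)\<^sup>2 / n = threshold"
    unfolding threshold_def classes ..
  show ?thesis
    using exists_misplaced[of N, unfolded total t, OF class1 class2 n_ge_4 incorrect1 incorrect2]
    unfolding N_def .
qed

lemma exists_misplaced_sample:
  assumes "C1 \<subseteq> {1..n}" and "{C1, {1..n} - C1} \<noteq> {true_cluster 1, true_cluster 2}"
  obtains C i where "C = C1 \<or> C = {1..n} - C1" "i \<in> C" "card C \<ge> 2"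
    "threshold \<le> move_margin (card {l\<in>C. z l \<noteq> z i}) (card C)
        (card {l\<in>{1..n} - C. z l \<noteq> z i}) (card ({1..n} - C))"
proof -
  define P where "P j = (if j = 1 then C1 else {1..n} - C1)" for j :: nat
  define N where "N = split_count C1"
  have N: "N j c = card {l\<in>P j. z l = c}" for j c by (simp add: N_def P_def split_count_def)
  have P_sub: "P j \<subseteq> {1..n}" for j using assms(1) by (simp add: P_def)
  have P_swap: "{1..n} - P j = P (3 - j)" if "j \<in> {1, 2}" for j
    using that assms(1) by (auto simp: P_def)
  have size: "N j 1 + N j 2 = card (P j)" for j
    unfolding N using P_sub by (rule card_classes)
  obtain j c where "j \<in> {1, 2}" "c \<in> {1, 2}" and misplaced: "has_misplaced N threshold j c"
    using exists_misplaced_split_count[OF assms] unfolding N_def by blast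
  then have "{l\<in>P j. z l = c} \<noteq> {}"
    by (intro notI) (simp add: has_misplaced_def N)
  then obtain i where "i \<in> P j" "z i = c" by blast
  have other: "card {l\<in>P k. z l \<noteq> z i} = N k (3 - c)" for k
    using other_class_eq[OF P_sub \<open>c \<in> {1, 2}\<close>] \<open>z i = c\<close> by (simp add: N)
  have counts: "card {l\<in>P j. z l \<noteq> z i} = N j (3 - c)" "card (P j) = N j 1 + N j 2"
      "card {l\<in>{1..n} - P j. z l \<noteq> z i} = N (3 - j) (3 - c)" "card ({1..n} - P j) = N (3 - j) 1 + N (3 - j) 2"
    unfolding P_swap[OF \<open>j \<in> {1, 2}\<close>] size other by (rule refl)+
  from misplaced have "N j 1 + N j 2 \<ge> 2" and margin: "threshold \<le> move_margin (N j (3 - c)) (N j 1 + N j 2)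
      (N (3 - j) (3 - c)) (N (3 - j) 1 + N (3 - j) 2)"
    unfolding has_misplaced_def by blast+
  show ?thesis
  proof (rule that)
    show "P j = C1 \<or> P j = {1..n} - C1" by (simp add: P_def)
    show "i \<in> P j" by fact
    show "card (P j) \<ge> 2" unfolding counts by fact
    show "threshold \<le> move_margin (card {l\<in>P j. z l \<noteq> z i}) (card (P j))
        (card {l\<in>{1..n} - P j. z l \<noteq> z i}) (card ({1..n} - P j))"
      unfolding counts using margin by simp
  qed
qed

lemma hartigan_dist_measurable:
  assumes "i \<in> {1..n}" "C \<subseteq> {1..n}"
  shows "(\<lambda>\<omega>. hartigan_dist (\<lambda>l. X l \<omega>) C i) \<in> borel_measurable M"
  unfolding hartigan_dist_eq_lincomb[OF assms] by measurable

lemma stay_event_measurable: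
  assumes "i \<in> {1..n}" "C \<subseteq> {1..n}" "C' \<subseteq> {1..n}"
  shows "{\<omega>\<in>space M. hartigan_dist (\<lambda>l. X l \<omega>) C i \<le> hartigan_dist (\<lambda>l. X l \<omega>) C' i} \<in> sets M"
  using hartigan_dist_measurable[OF assms(1,2)] hartigan_dist_measurable[OF assms(1,3)] by measurable

definition incorrect_split :: "nat set \<Rightarrow> bool" where
  "incorrect_split C1 \<longleftrightarrow> C1 \<noteq> {} \<and> {1..n} - C1 \<noteq> {} \<and> {C1, {1..n} - C1} \<noteq> {true_cluster 1, true_cluster 2}"

definition fixed_point_event :: "nat set \<Rightarrow> 'a set" where
  "fixed_point_event C1 =
     {\<omega>\<in>space M. incorrect_split C1 \<and> hartigan_fixed_point (\<lambda>l. X l \<omega>) C1 ({1..n} - C1)}"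

lemma fixed_point_event_measurable:
  assumes "C1 \<subseteq> {1..n}"
  shows "fixed_point_event C1 \<in> sets M"
proof -
  let ?C2 = "{1..n} - C1"
  have "finite C1" "finite ?C2" using assms finite_subset by auto
  have "fixed_point_event C1 = {\<omega>\<in>space M. incorrect_split C1 \<and>
      (\<forall>i\<in>C1. card C1 > 1 \<longrightarrow> hartigan_dist (\<lambda>l. X l \<omega>) C1 i \<le> hartigan_dist (\<lambda>l. X l \<omega>) ?C2 i) \<and>
      (\<forall>i\<in>?C2. card ?C2 > 1 \<longrightarrow> hartigan_dist (\<lambda>l. X l \<omega>) ?C2 i \<le> hartigan_dist (\<lambda>l. X l \<omega>) C1 i)}"
    by (simp add: fixed_point_event_def hartigan_fixed_point_def)
  also have "\<dots> \<in> sets M"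
    using assms \<open>finite C1\<close> \<open>finite ?C2\<close>
    by (intro sets.sets_Collect_conj sets.sets_Collect_const sets.sets_Collect_finite_All
        sets.sets_Collect_imp stay_event_measurable) auto
  finally show ?thesis .
qed

lemma prob_fixed_point_event_le:
  assumes "C1 \<subseteq> {1..n}"
  shows "prob (fixed_point_event C1) \<le> rho powr (CARD('d) / 4)"
proof (cases "incorrect_split C1")
  case True
  then have "{C1, {1..n} - C1} \<noteq> {true_cluster 1, true_cluster 2}" by (simp add: incorrect_split_def)
  with assms obtain C i where C: "C = C1 \<or> C = {1..n} - C1" and "i \<in> C" "card C \<ge> 2"
    and margin: "threshold \<le> move_margin (card {l\<in>C. z l \<noteq> z i}) (card C)
        (card {l\<in>{1..n} - C. z l \<noteq> z i}) (card ({1..n} - C))"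
    by (rule exists_misplaced_sample)
  have "C1 \<noteq> {}" "{1..n} - C1 \<noteq> {}" using True unfolding incorrect_split_def by blast+
  have complement: "{1..n} - ({1..n} - C1) = C1" using assms by blast
  have "C \<subseteq> {1..n}" "{1..n} - C \<noteq> {}"
    using C complement \<open>C1 \<noteq> {}\<close> \<open>{1..n} - C1 \<noteq> {}\<close> assms by auto
  have "fixed_point_event C1 \<subseteq> {\<omega>\<in>space M. hartigan_dist (\<lambda>l. X l \<omega>) C i \<le> hartigan_dist (\<lambda>l. X l \<omega>) ({1..n} - C) i}"
    using C
  proof
    assume "C = C1"
    show ?thesis using \<open>i \<in> C\<close> \<open>card C \<ge> 2\<close>
      unfolding \<open>C = C1\<close> fixed_point_event_def hartigan_fixed_point_def by auto
  next
    assume "C = {1..n} - C1"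
    show ?thesis using \<open>i \<in> C\<close> \<open>card C \<ge> 2\<close>
      unfolding \<open>C = {1..n} - C1\<close> complement fixed_point_event_def hartigan_fixed_point_def by auto
  qed
  then have "prob (fixed_point_event C1)
      \<le> prob {\<omega>\<in>space M. hartigan_dist (\<lambda>l. X l \<omega>) C i \<le> hartigan_dist (\<lambda>l. X l \<omega>) ({1..n} - C) i}"
    using \<open>i \<in> C\<close> \<open>C \<subseteq> {1..n}\<close> by (intro finite_measure_mono stay_event_measurable) auto
  also have "\<dots> \<le> rho powr (CARD('d) / 4)"
    unfolding rho_eq using \<open>C \<subseteq> {1..n}\<close> \<open>i \<in> C\<close> \<open>card C \<ge> 2\<close> \<open>{1..n} - C \<noteq> {}\<close> threshold_pos margin
    by (rule prob_stay_le)
  finally show ?thesis .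
qed (simp add: fixed_point_event_def)

lemma incorrect_fixed_points_eq:
  "{\<omega>\<in>space M. \<exists>C1 C2. C1 \<noteq> {} \<and> C2 \<noteq> {} \<and> C1 \<inter> C2 = {} \<and> C1 \<union> C2 = {1..n}
       \<and> {C1, C2} \<noteq> {true_cluster 1, true_cluster 2} \<and> hartigan_fixed_point (\<lambda>l. X l \<omega>) C1 C2}
   = (\<Union>C1\<in>Pow {1..n}. fixed_point_event C1)" (is "?E = _")
proof (intro equalityI subsetI)
  fix \<omega> assume "\<omega> \<in> ?E"
  then obtain C1 C2 where "\<omega> \<in> space M" "C1 \<noteq> {}" "C2 \<noteq> {}" "C1 \<inter> C2 = {}" "C1 \<union> C2 = {1..n}"
    "{C1, C2} \<noteq> {true_cluster 1, true_cluster 2}" "hartigan_fixed_point (\<lambda>l. X l \<omega>) C1 C2"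
    unfolding mem_Collect_eq by (elim conjE exE) (rule that)
  moreover have C2: "{1..n} - C1 = C2" using \<open>C1 \<inter> C2 = {}\<close> \<open>C1 \<union> C2 = {1..n}\<close> by blast
  ultimately have "\<omega> \<in> fixed_point_event C1"
    unfolding fixed_point_event_def incorrect_split_def C2 by (intro CollectI conjI)
  moreover have "C1 \<in> Pow {1..n}" using \<open>C1 \<union> C2 = {1..n}\<close> by blast
  ultimately show "\<omega> \<in> (\<Union>C1\<in>Pow {1..n}. fixed_point_event C1)" by (rule UN_I[rotated])
next
  fix \<omega> assume "\<omega> \<in> (\<Union>C1\<in>Pow {1..n}. fixed_point_event C1)"
  then obtain C1 where "C1 \<subseteq> {1..n}" "\<omega> \<in> fixed_point_event C1" by blast
  moreover have "C1 \<inter> ({1..n} - C1) = {}" "C1 \<union> ({1..n} - C1) = {1..n}"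
    using \<open>C1 \<subseteq> {1..n}\<close> by blast+
  ultimately show "\<omega> \<in> ?E"
    unfolding fixed_point_event_def incorrect_split_def mem_Collect_eq
    by (elim conjE) (intro conjI exI[of _ C1] exI[of _ "{1..n} - C1"])
qed

lemma Union_fixed_point_events_measurable: "(\<Union>C1\<in>Pow {1..n}. fixed_point_event C1) \<in> sets M"
  by (intro sets.finite_UN) (auto intro!: fixed_point_event_measurable)

lemma prob_incorrect_fixed_points_le:
  "measure M (\<Union>C1\<in>Pow {1..n}. fixed_point_event C1) \<le> 2 ^ n * rho powr (CARD('d) / 4)"
proof -
  have "measure M (\<Union>C1\<in>Pow {1..n}. fixed_point_event C1) \<le> (\<Sum>C1\<in>Pow {1..n}. prob (fixed_point_event C1))"
    by (rule measure_UNION_le) (auto intro!: fixed_point_event_measurable)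
  also have "\<dots> \<le> (\<Sum>C1\<in>Pow {1..n}. rho powr (CARD('d) / 4))"
    by (rule sum_mono) (auto intro!: prob_fixed_point_event_le)
  also have "\<dots> = 2 ^ n * rho powr (CARD('d) / 4)" by (simp add: card_Pow)
  finally show ?thesis .
qed

end

theorem corollary3p12:
  fixes M :: "'a measure"
    and mu :: "nat \<Rightarrow> 'a \<Rightarrow> real ^ 'd"
    and xi :: "nat \<Rightarrow> 'a \<Rightarrow> real ^ 'd"
    and z :: "nat \<Rightarrow> nat"
    and n :: nat and tau sigma :: real
  assumes "prob_space M"
    and "n \<ge> 4" and "tau > 0" and "sigma > 0"
    and "\<And>l. l \<in> {1, 2} \<Longrightarrow> distributed M lborel (mu l) (iso_gauss_density tau)"
    and "\<And>i. i \<in> {1..n} \<Longrightarrow> distributed M lborel (xi i) (iso_gauss_density sigma)"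
    and "prob_space.indep_vars M (\<lambda>_. borel) (case_sum mu xi) (Inl ` {1, 2} \<union> Inr ` {1..n})"
    and "\<And>i. i \<in> {1..n} \<Longrightarrow> z i \<in> {1, 2}"
    and "{i\<in>{1..n}. z i = 1} \<noteq> {}" and "{i\<in>{1..n}. z i = 2} \<noteq> {}"
  shows
    "let S1 = {i\<in>{1..n}. z i = 1}; S2 = {i\<in>{1..n}. z i = 2};
         Rstar = real (min (card S1) (card S2)) / real n;
         rho = 1 - (4 * tau\<^sup>2 * Rstar\<^sup>2 / real n / (3 * tau\<^sup>2 + sigma\<^sup>2))\<^sup>2;
         E = {\<omega> \<in> space M. \<exists>C1 C2. C1 \<noteq> {} \<and> C2 \<noteq> {} \<and> C1 \<inter> C2 = {} \<and> C1 \<union> C2 = {1..n}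
                \<and> {C1, C2} \<noteq> {S1, S2}
                \<and> hartigan_fixed_point (\<lambda>i. mu (z i) \<omega> + xi i \<omega>) C1 C2}
     in E \<in> sets M \<and> measure M E \<le> 2 ^ n * rho powr (real CARD('d) / 4)"
proof -
  interpret two_cluster_model M mu xi z n tau sigma
    using assms by (intro two_cluster_model.intro two_cluster_model_axioms.intro) simp_all
  show ?thesis
    unfolding Let_def true_cluster_def[symmetric] X_def[symmetric] rho_def[symmetric] incorrect_fixed_points_eq
    using Union_fixed_point_events_measurable prob_incorrect_fixed_points_le ..
qed

end
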